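(* Let $X$ be a set and let ${}^{*}X$ be a topological extension of $X$. Then: (1) ${}^{*}X$ satisfies the principle Ind if and only if ${}^{*}X$ is a Hausdorff space; (2) ${}^{*}X$ satisfies the principle Poss if and only if the $S$-topology of ${}^{*}X$ is quasi-compact; (3) ${}^{*}X$ satisfies both Ind and Poss if and only if the $S$-topology of ${}^{*}X$ is compact (i.e. Hausdorff and quasi-compact). Consequently, in this case either ${}^{*}X$ (with its original topology) is compact, or ${}^{*}X$ is not regular, and then the coarser $S$-topology on ${}^{*}X$ is compact and every ${}^{*}f$ (for $f:X\to X$) is still continuous with respect to the $S$-topology.
   Context: A topological extension of a set $X$ is a $T_1$ topological space ${}^{*}X$ containing $X$ as a discrete dense subspace, together with an assignment to each function $f:X\to X$ of a continuous map ${}^{*}f:{}^{*}X\to{}^{*}X$ extending $f$, such that (c) ${}^{*}g\circ{}^{*}f={}^{*}(g\circ f)$ for all $f,g:X\to X$, and (i) if $f(x)=x$ for all $x\in A\subseteq X$, then ${}^{*}f(\xi)=\xi$ for all $\xi$ in the closure $\overline{A}$ of $A$ in ${}^{*}X$. For $A\subseteq X$ write ${}^{*}A=\overline{A}$ (the closure of $A$ in ${}^{*}X$; it is clopen). The $S$-topology on ${}^{*}X$ is the topology generated by the sets ${}^{*}A$, $A\subseteq X$. Principle Ind: for any two distinct $\xi,\eta\in{}^{*}X$ there is $A\subseteq X$ with $\xi\in{}^{*}A$ and $\eta\notin{}^{*}A$. Principle Poss: for every family $\mathcal F$ of subsets of $X$, if $\bigcap_{A\in\mathcal F}{}^{*}A=\emptyset$,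 then there are finitely many $A_1,\dots,A_n\in\mathcal F$ with $A_1\cap\dots\cap A_n=\emptyset$. "Compact" means Hausdorff and quasi-compact. *)

theory Defs
  imports "HOL-Analysis.Analysis"
begin

(* The star-X is the carrier topspace T of a topology T on a type containing X.
  star assigns to each f a map star f on topspace T. *)

definition topological_extension ::
  "'a set \<Rightarrow> 'a topology \<Rightarrow> (('a \<Rightarrow> 'a) \<Rightarrow> ('a \<Rightarrow> 'a)) \<Rightarrow> bool" where
  "topological_extension X T star \<longleftrightarrow>
     t1_space T \<and>
     X \<subseteq> topspace T \<and>
     subtopology T X = discrete_topology X \<and>
     T closure_of X = topspace T \<and>
     (\<forall>f \<in> X \<rightarrow>\<^sub>E X. continuous_map T T (star f) \<and> (\<forall>x\<in>X. star f x = f x)) \<and>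
     (\<forall>f \<in> X \<rightarrow>\<^sub>E X. \<forall>g \<in> X \<rightarrow>\<^sub>E X. \<forall>\<xi> \<in> topspace T.
         star g (star f \<xi>) = star (restrict (g \<circ> f) X) \<xi>) \<and>
     (\<forall>f \<in> X \<rightarrow>\<^sub>E X. \<forall>A. A \<subseteq> X \<longrightarrow> (\<forall>x\<in>A. f x = x) \<longrightarrow>
         (\<forall>\<xi> \<in> T closure_of A. star f \<xi> = \<xi>))"

(* The S-topology: generated by the sets star A = closure of A, A <= X. *)
definition S_topology :: "'a set \<Rightarrow> 'a topology \<Rightarrow> 'a topology" where
  "S_topology X T = topology_generated_by {T closure_of A | A. A \<subseteq> X}"

definition principle_Ind :: "'a set \<Rightarrow> 'a topology \<Rightarrow> bool" where
  "principle_Ind X T \<longleftrightarrow>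
     (\<forall>\<xi> \<in> topspace T. \<forall>\<eta> \<in> topspace T. \<xi> \<noteq> \<eta> \<longrightarrow>
        (\<exists>A. A \<subseteq> X \<and> \<xi> \<in> T closure_of A \<and> \<eta> \<notin> T closure_of A))"

(* Poss; a finite subfamily with empty intersection (the intersection of
  the empty subfamily is read as X). *)
definition principle_Poss :: "'a set \<Rightarrow> 'a topology \<Rightarrow> bool" where
  "principle_Poss X T \<longleftrightarrow>
     (\<forall>\<F>. \<F> \<subseteq> Pow X \<longrightarrow>
        topspace T \<inter> (\<Inter>A\<in>\<F>. T closure_of A) = {} \<longrightarrow>
        (\<exists>\<G>. \<G> \<subseteq> \<F> \<and> finite \<G> \<and> X \<inter> \<Inter>\<G> = {}))"

end

theory Submission imports Defs begin

text \<open>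
  For \<open>A \<subseteq> X\<close>, a map \<open>f : X \<rightarrow> X\<close> collapsing \<open>A\<close> and \<open>X - A\<close> to two distinct points
  extends continuously to \<open>\<^sup>*X\<close>, so \<open>\<^sup>*A\<close> and \<open>\<^sup>*(X - A)\<close> are disjoint; being closed and
  covering \<open>\<^sup>*X\<close>, they are complementary clopen sets. Hence \<open>A \<mapsto> \<^sup>*A\<close> is a Boolean
  homomorphism onto a base of clopen sets of the \<open>S\<close>-topology, which is coarser than the
  original one. Ind says exactly that this base separates points, which gives Hausdorffness
  of either topology; Poss is the finite intersection property for the closed basic sets,
  which is compactness of the \<open>S\<close>-topology. If \<open>\<^sup>*X\<close> is regular, every point has a closed
  neighbourhood inside any given open set, and the clopen set \<open>\<^sup>*(V \<inter> X)\<close> of an open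
  \<open>V\<close> lies in between; so both topologies coincide.
\<close>

lemma openin_subset_closure_of_Int_dense:
  assumes "T closure_of X = topspace T" and "openin T V"
  shows "V \<subseteq> T closure_of (V \<inter> X)"
  using openin_Int_closure_of_subset[OF assms(2), of X] assms openin_subset by fastforce

locale star_extension =
  fixes X :: "'a set" and T :: "'a topology" and star :: "('a \<Rightarrow> 'a) \<Rightarrow> 'a \<Rightarrow> 'a"
  assumes extension: "topological_extension X T star"
begin

lemma t1_space: "t1_space T"
  and X_subset_topspace: "X \<subseteq> topspace T"
  and closure_of_X: "T closure_of X = topspace T"
  and continuous_map_star: "f \<in> X \<rightarrow>\<^sub>E X \<Longrightarrow> continuous_map T T (star f)"
  and star_extends: "f \<in> X \<rightarrow>\<^sub>E X \<Longrightarrow> x \<in> X \<Longrightarrow> star f x = f x"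
  using extension unfolding topological_extension_def by auto

lemma star_image_closure_of:
  assumes "f \<in> X \<rightarrow>\<^sub>E X" and "A \<subseteq> X"
  shows "star f ` (T closure_of A) \<subseteq> T closure_of (f ` A)"
proof -
  have "star f ` A = f ` A"
    using assms star_extends by (auto intro!: image_cong)
  then show ?thesis
    using continuous_map_image_closure_subset[OF continuous_map_star[OF assms(1)]] by metis
qed

lemma closure_of_Int_closure_of_complement:
  assumes "A \<subseteq> X"
  shows "T closure_of A \<inter> T closure_of (X - A) = {}"
proof (cases "A = {} \<or> A = X")
  case False
  then obtain a b where ab: "a \<in> A" "b \<in> X - A"
    using assms by blast
  define f where "f = restrict (\<lambda>x. if x \<in> A then a else b) X"
  have f: "f \<in> X \<rightarrow>\<^sub>E X"
    using ab assms unfolding f_def by auto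
  have closure_sing: "T closure_of {c} = {c}" if "c \<in> X" for c
    using t1_space that X_subset_topspace by (simp add: closure_of_eq t1_space_closedin_singleton subset_iff)
  have "f ` A \<subseteq> {a}" "f ` (X - A) \<subseteq> {b}"
    using assms unfolding f_def by auto
  then have "T closure_of (f ` A) \<subseteq> {a}" "T closure_of (f ` (X - A)) \<subseteq> {b}"
    using closure_of_mono[of _ "{_}" T] closure_sing ab assms by blast+
  then have "star f ` (T closure_of A) \<subseteq> {a}" "star f ` (T closure_of (X - A)) \<subseteq> {b}"
    using star_image_closure_of[OF f] assms by (meson Diff_subset order_trans)+
  then show ?thesis
    using ab by blast
qed auto

lemma closure_of_complement:
  assumes "A \<subseteq> X"
  shows "T closure_of (X - A) = topspace T - T closure_of A"
proof -
  have "T closure_of A \<union> T closure_of (X - A) = topspace T"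
    using assms closure_of_X closure_of_Un[of T A "X - A"] by (simp add: Un_absorb1)
  then show ?thesis
    using closure_of_Int_closure_of_complement[OF assms] by blast
qed

lemma openin_closure_of:
  assumes "A \<subseteq> X"
  shows "openin T (T closure_of A)"
proof -
  have "T closure_of A = topspace T - T closure_of (X - A)"
    using closure_of_complement[of "X - A"] assms by (simp add: double_diff)
  then show ?thesis
    by (simp add: openin_diff)
qed

lemma closure_of_Int:
  assumes "A \<subseteq> X" "B \<subseteq> X"
  shows "T closure_of (A \<inter> B) = T closure_of A \<inter> T closure_of B"
proof
  have "T closure_of A = T closure_of (A \<inter> B) \<union> T closure_of (A - B)"
    by (metis closure_of_Un Int_Diff_Un)
  moreover have "T closure_of (A - B) \<subseteq> T closure_of (X - B)"
    using assms by (intro closure_of_mono) blast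
  ultimately show "T closure_of A \<inter> T closure_of B \<subseteq> T closure_of (A \<inter> B)"
    using closure_of_Int_closure_of_complement[OF assms(2)] by blast
qed (simp add: closure_of_mono)

lemma star_preimage_closure_of:
  assumes f: "f \<in> X \<rightarrow>\<^sub>E X" and "A \<subseteq> X"
  shows "star f -` (T closure_of A) \<inter> topspace T = T closure_of (X \<inter> f -` A)"
proof -
  let ?B = "X \<inter> f -` A"
  have "f ` (X - ?B) \<subseteq> X - A"
    using f by auto
  then have "star f ` (T closure_of (X - ?B)) \<subseteq> T closure_of (X - A)"
    using star_image_closure_of[OF f, of "X - ?B"] closure_of_mono by blast
  moreover have "star f ` (T closure_of ?B) \<subseteq> T closure_of A"
    using star_image_closure_of[OF f, of ?B] closure_of_mono[of "f ` ?B" A T] by blast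
  ultimately show ?thesis
    using closure_of_complement[OF assms(2)] closure_of_complement[of ?B]
      closure_of_subset_topspace[of T ?B] by blast
qed

lemma topspace_S_topology: "topspace (S_topology X T) = topspace T"
proof -
  have "T closure_of X \<subseteq> \<Union>{T closure_of A | A. A \<subseteq> X}"
    by blast
  then have "\<Union>{T closure_of A | A. A \<subseteq> X} = topspace T"
    using closure_of_X closure_of_subset_topspace by fastforce
  then show ?thesis
    unfolding S_topology_def by simp
qed

lemma openin_S_topology_closure_of: "A \<subseteq> X \<Longrightarrow> openin (S_topology X T) (T closure_of A)"
  unfolding S_topology_def by (rule topology_generated_by_Basis) blast

lemma openin_S_topology_imp_openin:
  assumes "openin (S_topology X T) U"
  shows "openin T U"
  using assms[unfolded S_topology_def, THEN openin_topology_generated_by]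
  by induct (auto intro: openin_closure_of)

lemma openin_S_topology_basic_neighbourhood:
  assumes "openin (S_topology X T) U" "\<xi> \<in> U"
  obtains A where "A \<subseteq> X" "\<xi> \<in> T closure_of A" "T closure_of A \<subseteq> U"
proof -
  have "\<exists>A \<subseteq> X. \<xi> \<in> T closure_of A \<and> T closure_of A \<subseteq> U"
    using assms(1)[unfolded S_topology_def, THEN openin_topology_generated_by] assms(2)
  proof (induct arbitrary: \<xi>)
    case (Int V W)
    obtain A where "A \<subseteq> X" "\<xi> \<in> T closure_of A" "T closure_of A \<subseteq> V"
      using Int.hyps(2) Int.prems by blast
    moreover obtain B where "B \<subseteq> X" "\<xi> \<in> T closure_of B" "T closure_of B \<subseteq> W"
      using Int.hyps(4) Int.prems by blast
    ultimately show ?case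
      using closure_of_Int[of A B] by (intro exI[of _ "A \<inter> B"]) auto
  next
    case (UN K)
    then obtain k where k: "k \<in> K" "\<xi> \<in> k"
      by blast
    then obtain A where "A \<subseteq> X" "\<xi> \<in> T closure_of A" "T closure_of A \<subseteq> k"
      using UN.hyps(2) by blast
    then show ?case
      using k(1) by blast
  next
    case (Basis V)
    then show ?case
      by blast
  qed simp
  then show ?thesis
    using that by blast
qed

lemma continuous_map_S_topology_star:
  assumes "f \<in> X \<rightarrow>\<^sub>E X"
  shows "continuous_map (S_topology X T) (S_topology X T) (star f)"
  unfolding S_topology_def
proof (rule continuous_on_generated_topo)
  fix U assume "U \<in> {T closure_of A | A. A \<subseteq> X}"
  then obtain A where "A \<subseteq> X" "U = T closure_of A" by blast
  then show "openin (topology_generated_by {T closure_of A | A. A \<subseteq> X})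
      (star f -` U \<inter> topspace (topology_generated_by {T closure_of A | A. A \<subseteq> X}))"
    using star_preimage_closure_of[OF assms] openin_S_topology_closure_of[of "X \<inter> f -` A"]
      topspace_S_topology unfolding S_topology_def by auto
next
  show "star f ` topspace (topology_generated_by {T closure_of A | A. A \<subseteq> X})
      \<subseteq> \<Union>{T closure_of A | A. A \<subseteq> X}"
    using topspace_S_topology continuous_map_image_subset_topspace[OF continuous_map_star[OF assms]]
    unfolding S_topology_def by simp
qed

lemma Ind_imp_separating_closure_of:
  assumes "principle_Ind X T" "\<xi> \<in> topspace T" "\<eta> \<in> topspace T" "\<xi> \<noteq> \<eta>"
  obtains A where "A \<subseteq> X" "\<xi> \<in> T closure_of A" "\<eta> \<in> T closure_of (X - A)"
proof -
  obtain A where "A \<subseteq> X" "\<xi> \<in> T closure_of A" "\<eta> \<notin> T closure_of A"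
    using assms unfolding principle_Ind_def by blast
  then show ?thesis
    using that closure_of_complement[of A] assms(3) by blast
qed

lemma Ind_imp_Hausdorff_S_topology:
  assumes "principle_Ind X T"
  shows "Hausdorff_space (S_topology X T)"
  unfolding Hausdorff_space_def topspace_S_topology
proof (intro allI impI)
  fix \<xi> \<eta> assume "\<xi> \<in> topspace T \<and> \<eta> \<in> topspace T \<and> \<xi> \<noteq> \<eta>"
  then obtain A where "A \<subseteq> X" "\<xi> \<in> T closure_of A" "\<eta> \<in> T closure_of (X - A)"
    using Ind_imp_separating_closure_of[OF assms] by blast
  then show "\<exists>U V. openin (S_topology X T) U \<and> openin (S_topology X T) V
      \<and> \<xi> \<in> U \<and> \<eta> \<in> V \<and> disjnt U V"
    using openin_S_topology_closure_of[of A] openin_S_topology_closure_of[of "X - A"]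
      closure_of_Int_closure_of_complement[of A] by (auto simp: disjnt_def)
qed

lemma Hausdorff_S_topology_imp_Hausdorff:
  assumes "Hausdorff_space (S_topology X T)"
  shows "Hausdorff_space T"
  using assms by (rule Hausdorff_space_expansive) (simp_all add: topspace_S_topology openin_S_topology_imp_openin)

lemma Hausdorff_imp_Ind:
  assumes "Hausdorff_space T"
  shows "principle_Ind X T"
  unfolding principle_Ind_def
proof (intro ballI impI)
  fix \<xi> \<eta> assume "\<xi> \<in> topspace T" "\<eta> \<in> topspace T" "\<xi> \<noteq> \<eta>"
  then obtain U V where UV: "openin T U" "openin T V" "\<xi> \<in> U" "\<eta> \<in> V" "disjnt U V"
    using assms unfolding Hausdorff_space_def by blast
  have "\<xi> \<in> T closure_of (U \<inter> X)"
    using openin_subset_closure_of_Int_dense[OF closure_of_X UV(1)] UV(3) by blast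
  moreover have "V \<inter> T closure_of (U \<inter> X) = {}"
    using UV(5) openin_Int_closure_of_eq_empty[OF UV(2)] by (auto simp: disjnt_def)
  ultimately show "\<exists>A \<subseteq> X. \<xi> \<in> T closure_of A \<and> \<eta> \<notin> T closure_of A"
    using UV(4) by (intro exI[of _ "U \<inter> X"]) blast
qed

lemma Ind_iff_Hausdorff: "principle_Ind X T \<longleftrightarrow> Hausdorff_space T"
  using Hausdorff_imp_Ind Hausdorff_S_topology_imp_Hausdorff[OF Ind_imp_Hausdorff_S_topology] by blast

lemma Ind_iff_Hausdorff_S_topology: "principle_Ind X T \<longleftrightarrow> Hausdorff_space (S_topology X T)"
  using Ind_imp_Hausdorff_S_topology Hausdorff_imp_Ind[OF Hausdorff_S_topology_imp_Hausdorff] by blast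

lemma Poss_imp_compact_S_topology:
  assumes "principle_Poss X T"
  shows "compact_space (S_topology X T)"
  unfolding compact_space_alt topspace_S_topology
proof (intro allI impI)
  fix \<U> assume "(\<forall>U\<in>\<U>. openin (S_topology X T) U) \<and> topspace T \<subseteq> \<Union>\<U>"
  then have \<U>: "\<And>U. U \<in> \<U> \<Longrightarrow> openin (S_topology X T) U" and cover: "topspace T \<subseteq> \<Union>\<U>"
    by blast+
  \<comment> \<open>Poss is applied to the complements of the basic sets that refine the cover.\<close>
  define \<A> where "\<A> = {A. A \<subseteq> X \<and> (\<exists>U\<in>\<U>. T closure_of A \<subseteq> U)}"
  have "\<exists>A\<in>\<A>. \<xi> \<notin> T closure_of (X - A)" if \<xi>: "\<xi> \<in> topspace T" for \<xi>
  proof -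
    obtain U where U: "U \<in> \<U>" "\<xi> \<in> U"
      using cover \<xi> by blast
    obtain A where A: "A \<subseteq> X" "\<xi> \<in> T closure_of A" "T closure_of A \<subseteq> U"
      using openin_S_topology_basic_neighbourhood[OF \<U>[OF U(1)] U(2)] .
    have "A \<in> \<A>"
      using A(1,3) U(1) unfolding \<A>_def by blast
    moreover have "\<xi> \<notin> T closure_of (X - A)"
      using A(2) closure_of_Int_closure_of_complement[OF A(1)] by blast
    ultimately show ?thesis ..
  qed
  then have "topspace T \<inter> (\<Inter>B \<in> (\<lambda>A. X - A) ` \<A>. T closure_of B) = {}"
    by blast
  moreover have "(\<lambda>A. X - A) ` \<A> \<subseteq> Pow X"
    by blast
  ultimately obtain \<G> where \<G>: "\<G> \<subseteq> (\<lambda>A. X - A) ` \<A>" "finite \<G>" "X \<inter> \<Inter>\<G> = {}"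
    using assms[unfolded principle_Poss_def, rule_format, of "(\<lambda>A. X - A) ` \<A>"] by blast
  then obtain \<A>' where \<A>': "\<A>' \<subseteq> \<A>" "finite \<A>'" "\<G> = (\<lambda>A. X - A) ` \<A>'"
    by (meson finite_subset_image)
  have "X \<subseteq> \<Union>\<A>'"
    using \<G>(3) \<A>'(3) by blast
  then have "T closure_of X \<subseteq> T closure_of (\<Union>\<A>')"
    by (rule closure_of_mono)
  then have covered: "topspace T \<subseteq> (\<Union>A\<in>\<A>'. T closure_of A)"
    using closure_of_X closure_of_Union[OF \<A>'(2)] by simp
  have "\<forall>A\<in>\<A>'. \<exists>U. U \<in> \<U> \<and> T closure_of A \<subseteq> U"
    using \<A>'(1) unfolding \<A>_def by blast
  then obtain u where u: "\<forall>A\<in>\<A>'. u A \<in> \<U> \<and> T closure_of A \<subseteq> u A"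
    by (rule bchoice[THEN exE])
  have "topspace T \<subseteq> \<Union>(u ` \<A>')"
    using covered UN_mono[of \<A>' \<A>' "\<lambda>A. T closure_of A" u] u by blast
  moreover have "u ` \<A>' \<subseteq> \<U>"
    using u by blast
  ultimately show "\<exists>\<F>. finite \<F> \<and> \<F> \<subseteq> \<U> \<and> topspace T \<subseteq> \<Union>\<F>"
    using \<A>'(2) by (intro exI[of _ "u ` \<A>'"]) simp
qed

lemma compact_S_topology_imp_Poss:
  assumes "compact_space (S_topology X T)"
  shows "principle_Poss X T"
  unfolding principle_Poss_def
proof (intro allI impI)
  fix \<F> assume \<F>: "\<F> \<subseteq> Pow X" and empty: "topspace T \<inter> (\<Inter>A\<in>\<F>. T closure_of A) = {}"
  let ?\<U> = "(\<lambda>A. T closure_of (X - A)) ` \<F>"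
  have "\<forall>U\<in>?\<U>. openin (S_topology X T) U"
    using openin_S_topology_closure_of by blast
  moreover have "topspace T \<subseteq> \<Union>?\<U>"
  proof
    fix \<xi> assume \<xi>: "\<xi> \<in> topspace T"
    then obtain A where A: "A \<in> \<F>" "\<xi> \<notin> T closure_of A"
      using empty by blast
    then have "\<xi> \<in> T closure_of (X - A)"
      using \<xi> \<F> closure_of_complement[of A] by blast
    then show "\<xi> \<in> \<Union>?\<U>"
      using A(1) by blast
  qed
  ultimately obtain \<V> where "finite \<V>" "\<V> \<subseteq> ?\<U>" "topspace T \<subseteq> \<Union>\<V>"
    using assms[unfolded compact_space_alt, rule_format, of ?\<U>]
    unfolding topspace_S_topology by blast
  then obtain \<G> where \<G>: "\<G> \<subseteq> \<F>" "finite \<G>" "topspace T \<subseteq> (\<Union>A\<in>\<G>. T closure_of (X - A))"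
    by (metis finite_subset_image)
  have "x \<notin> \<Inter>\<G>" if x: "x \<in> X" for x
  proof
    assume "x \<in> \<Inter>\<G>"
    obtain A where A: "A \<in> \<G>" "x \<in> T closure_of (X - A)"
      using \<G>(3) x X_subset_topspace by blast
    have AX: "A \<subseteq> X"
      using A(1) \<G>(1) \<F> by blast
    have "x \<in> T closure_of A"
      using \<open>x \<in> \<Inter>\<G>\<close> A(1) closure_of_subset[of A T] AX X_subset_topspace by blast
    then show False
      using A(2) closure_of_Int_closure_of_complement[OF AX] by blast
  qed
  then show "\<exists>\<G>\<subseteq>\<F>. finite \<G> \<and> X \<inter> \<Inter>\<G> = {}"
    using \<G>(1,2) by blast
qed

lemma Poss_iff_compact_S_topology: "principle_Poss X T \<longleftrightarrow> compact_space (S_topology X T)"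
  using Poss_imp_compact_S_topology compact_S_topology_imp_Poss by blast

lemma regular_imp_S_topology_eq:
  assumes "regular_space T"
  shows "S_topology X T = T"
proof -
  have "openin (S_topology X T) U" if U: "openin T U" for U
  proof (subst openin_subopen, intro ballI)
    fix \<xi> assume "\<xi> \<in> U"
    then have "\<xi> \<in> topspace T - (topspace T - U)"
      using openin_subset[OF U] by blast
    moreover have "closedin T (topspace T - U)"
      using U by blast
    ultimately obtain V where V: "openin T V" "\<xi> \<in> V" "disjnt (topspace T - U) (T closure_of V)"
      using assms unfolding regular_space by blast
    have "T closure_of (V \<inter> X) \<subseteq> U"
      using V(3) closure_of_mono[of "V \<inter> X" V T] closure_of_subset_topspace[of T V]
      by (auto simp: disjnt_def)
    moreover have "\<xi> \<in> T closure_of (V \<inter> X)"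
      using openin_subset_closure_of_Int_dense[OF closure_of_X V(1)] V(2) by blast
    ultimately show "\<exists>W. openin (S_topology X T) W \<and> \<xi> \<in> W \<and> W \<subseteq> U"
      using openin_S_topology_closure_of[of "V \<inter> X"] by blast
  qed
  then show ?thesis
    unfolding topology_eq using openin_S_topology_imp_openin by blast
qed

end

theorem corollary1p3:
  fixes X :: "'a set" and T :: "'a topology" and star :: "('a \<Rightarrow> 'a) \<Rightarrow> ('a \<Rightarrow> 'a)"
  assumes "topological_extension X T star"
  shows "(principle_Ind X T \<longleftrightarrow> Hausdorff_space T)
    \<and> (principle_Poss X T \<longleftrightarrow> compact_space (S_topology X T))
    \<and> (principle_Ind X T \<and> principle_Poss X T \<longleftrightarrow>
         Hausdorff_space (S_topology X T) \<and> compact_space (S_topology X T))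
    \<and> (principle_Ind X T \<and> principle_Poss X T \<longrightarrow>
         ((Hausdorff_space T \<and> compact_space T) \<or> \<not> regular_space T)
         \<and> (\<forall>U. openin (S_topology X T) U \<longrightarrow> openin T U)
         \<and> Hausdorff_space (S_topology X T) \<and> compact_space (S_topology X T)
         \<and> (\<forall>f \<in> X \<rightarrow>\<^sub>E X. continuous_map (S_topology X T) (S_topology X T) (star f)))"
proof -
  interpret star_extension X T star
    using assms by unfold_locales
  have "(Hausdorff_space T \<and> compact_space T) \<or> \<not> regular_space T"
    if "principle_Ind X T" "principle_Poss X T"
  proof (rule disjCI)
    assume "\<not> \<not> regular_space T"
    then have "S_topology X T = T"
      using regular_imp_S_topology_eq by blast
    then show "Hausdorff_space T \<and> compact_space T"
      using that Ind_iff_Hausdorff Poss_iff_compact_S_topology by simp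
  qed
  then show ?thesis
    using Ind_iff_Hausdorff Ind_iff_Hausdorff_S_topology Poss_iff_compact_S_topology
      openin_S_topology_imp_openin continuous_map_S_topology_star by blast
qed

end
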